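(* Let $\mathcal G=(V,E,r)$ be a graph. (1) The monoid $\mathbf A(\mathcal G)$ is half-factorial if and only if $\mathcal G$ is acyclic. (2) The monoid $\mathbf A(\mathcal G)$ is factorial if and only if every connected component of $\mathcal G$ contains at most one edge.
   Context: A graph $\mathcal G=(V,E,r)$ consists of a finite vertex set $V$, a finite edge set $E$ disjoint from $V$, and a map $r$ assigning to each edge a two-element subset of $V$; multiple edges allowed, no loops. Acyclic means containing no cycle, where two edges with the same pair of endpoints form a cycle of length $2$. An agglomeration on $\mathcal G$ is a function $a\colon V\cup E\to\mathbb N_0$ with $a(v)\ge a(e)$ whenever $v$ is incident with $e$; $\mathbf A(\mathcal G)$ is the monoid of agglomerations under pointwise addition. A reduced atomic monoid is half-factorial if any two factorizations of an element into atoms have the same number of atoms, and factorial if every element factors uniquely into atoms up to order. *)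

theory Defs
  imports Main "HOL-Library.Multiset" "HOL-Library.Function_Algebras"
begin

text \<open>Multiple edges allowed, no loops.
  Disjointness of V and E is built in by working on the sum type 'v + 'e.\<close>
definition graph :: "'v set \<Rightarrow> 'e set \<Rightarrow> ('e \<Rightarrow> 'v set) \<Rightarrow> bool" where
  "graph V E r \<longleftrightarrow> finite V \<and> finite E \<and> (\<forall>e\<in>E. r e \<subseteq> V \<and> card (r e) = 2)"

text \<open>Cycle: distinct vertices v_0..v_{k-1} (k \<ge> 2) and distinct edges e_0..e_{k-1}
  with r e_i = {v_i, v_{i+1 mod k}}. For k = 2 this is a pair of parallel edges.\<close>
definition is_cycle :: "'v set \<Rightarrow> 'e set \<Rightarrow> ('e \<Rightarrow> 'v set) \<Rightarrow> 'v list \<Rightarrow> 'e list \<Rightarrow> bool" where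
  "is_cycle V E r vs es \<longleftrightarrow>
     length vs = length es \<and> length vs \<ge> 2 \<and> distinct vs \<and> distinct es \<and>
     set vs \<subseteq> V \<and> set es \<subseteq> E \<and>
     (\<forall>i<length vs. r (es ! i) = {vs ! i, vs ! ((i + 1) mod length vs)})"

definition graph_acyclic :: "'v set \<Rightarrow> 'e set \<Rightarrow> ('e \<Rightarrow> 'v set) \<Rightarrow> bool" where
  "graph_acyclic V E r \<longleftrightarrow> \<not> (\<exists>vs es. is_cycle V E r vs es)"

definition adj_rel :: "'v set \<Rightarrow> 'e set \<Rightarrow> ('e \<Rightarrow> 'v set) \<Rightarrow> ('v \<times> 'v) set" where
  "adj_rel V E r = {(u, w). \<exists>e\<in>E. r e = {u, w}}"

definition component :: "'v set \<Rightarrow> 'e set \<Rightarrow> ('e \<Rightarrow> 'v set) \<Rightarrow> 'v \<Rightarrow> 'v set" where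
  "component V E r v = {w \<in> V. (v, w) \<in> (adj_rel V E r)\<^sup>*}"

definition component_edges :: "'v set \<Rightarrow> 'e set \<Rightarrow> ('e \<Rightarrow> 'v set) \<Rightarrow> 'v \<Rightarrow> 'e set" where
  "component_edges V E r v = {e \<in> E. r e \<subseteq> component V E r v}"

definition agglomerations :: "'v set \<Rightarrow> 'e set \<Rightarrow> ('e \<Rightarrow> 'v set) \<Rightarrow> ('v + 'e \<Rightarrow> nat) set" where
  "agglomerations V E r =
     {a. (\<forall>v. v \<notin> V \<longrightarrow> a (Inl v) = 0) \<and> (\<forall>e. e \<notin> E \<longrightarrow> a (Inr e) = 0) \<and>
         (\<forall>e\<in>E. \<forall>v\<in>r e. a (Inr e) \<le> a (Inl v))}"

text \<open>Atoms and factorizations in a reduced commutative monoid M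
  (a submonoid of a commutative monoid whose only unit is 0).\<close>
definition atoms :: "'a::comm_monoid_add set \<Rightarrow> 'a set" where
  "atoms M = {a \<in> M. a \<noteq> 0 \<and> (\<forall>b\<in>M. \<forall>c\<in>M. a = b + c \<longrightarrow> b = 0 \<or> c = 0)}"

definition factorizations :: "'a::comm_monoid_add set \<Rightarrow> 'a \<Rightarrow> 'a multiset set" where
  "factorizations M a = {F. set_mset F \<subseteq> atoms M \<and> sum_mset F = a}"

definition half_factorial :: "'a::comm_monoid_add set \<Rightarrow> bool" where
  "half_factorial M \<longleftrightarrow>
     (\<forall>a\<in>M. \<forall>F\<in>factorizations M a. \<forall>G\<in>factorizations M a. size F = size G)"

definition factorial :: "'a::comm_monoid_add set \<Rightarrow> bool" where
  "factorial M \<longleftrightarrow> (\<forall>a\<in>M. \<exists>!F. F \<in> factorizations M a)"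

end

theory Submission
  imports Defs
begin

(* The atoms of A(G) are exactly the indicator functions of the nonempty subgraphs (W, F) that
   are not the disjoint union of two nonempty subgraphs, and such a subgraph has |W| <= |F| + 1,
   with equality when G is acyclic. So on an acyclic graph the additive Euler characteristic
   sum_v a(v) - sum_e a(e) is 1 on every atom and counts the length of any factorization.
   Conversely, a cycle v_0 ... v_n yields the relation
   (path v_0 ... v_n) + (closing edge) = (whole cycle) + v_0 + v_n between atoms.
   If no two edges meet, the atoms are the single vertices and the single edges, and every atom
   has an additive functional dual to it (a(e) for an edge e, a(v) minus the sum of a(e) over the
   edges e at v for a vertex v), so factorizations are unique. Two edges e, f meeting in v form a
   2-cycle or give the relation e + f = (e together with f) + v. *)

section \<open>Factorizations in commutative monoids\<close>

lemma factorizations_add: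
  "F \<in> factorizations M a \<Longrightarrow> G \<in> factorizations M b \<Longrightarrow> F + G \<in> factorizations M (a + b)"
  by (auto simp: factorizations_def)

lemma factorization_exists:
  fixes M :: "'a::comm_monoid_add set" and deg :: "'a \<Rightarrow> nat"
  assumes deg_add: "\<And>b c. b \<in> M \<Longrightarrow> c \<in> M \<Longrightarrow> deg (b + c) = deg b + deg c"
    and deg_pos: "\<And>b. b \<in> M \<Longrightarrow> b \<noteq> 0 \<Longrightarrow> 0 < deg b"
    and "a \<in> M"
  shows "\<exists>F. F \<in> factorizations M a"
  using \<open>a \<in> M\<close>
proof (induction "deg a" arbitrary: a rule: less_induct)
  case less
  show ?case
  proof (cases "a = 0 \<or> a \<in> atoms M")
    case True
    then have "(if a = 0 then {#} else {#a#}) \<in> factorizations M a"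
      by (auto simp: factorizations_def)
    then show ?thesis by blast
  next
    case False
    then obtain b c where bc: "b \<in> M" "c \<in> M" "a = b + c" "b \<noteq> 0" "c \<noteq> 0"
      using less.prems by (auto simp: atoms_def)
    then have "deg b < deg a" "deg c < deg a"
      using deg_add deg_pos by fastforce+
    then show ?thesis
      using less.hyps bc(1-3) factorizations_add by metis
  qed
qed

lemma additive_sum_mset:
  fixes f :: "'a::comm_monoid_add \<Rightarrow> 'b::cancel_comm_monoid_add"
  assumes "\<And>x y. f (x + y) = f x + f y"
  shows "f (sum_mset F) = (\<Sum>q\<in>#F. f q)"
proof (induction F)
  case empty
  show ?case using assms[of 0 0] by simp
next
  case (add q F)
  then show ?case using assms by simp
qed

lemma half_factorial_if_length_function:
  fixes M :: "'a::comm_monoid_add set" and len :: "'a \<Rightarrow> int"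
  assumes "\<And>x y. len (x + y) = len x + len y"
    and "\<And>q. q \<in> atoms M \<Longrightarrow> len q = 1"
  shows "half_factorial M"
proof -
  have "len a = int (size F)" if "F \<in> factorizations M a" for F a
  proof -
    have "len a = (\<Sum>q\<in>#F. len q)"
      using that additive_sum_mset[of len F] assms(1) by (simp add: factorizations_def)
    also have "\<dots> = (\<Sum>q\<in>#F. 1)"
      using that assms(2) by (intro arg_cong[where f = sum_mset] image_mset_cong)
        (auto simp: factorizations_def)
    finally show ?thesis by simp
  qed
  then show ?thesis unfolding half_factorial_def by (metis of_nat_eq_iff)
qed

lemma factorization_unique_if_duals:
  fixes M :: "'a::comm_monoid_add set"
  assumes duals: "\<And>p. p \<in> atoms M \<Longrightarrow> \<exists>d :: 'a \<Rightarrow> int.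
      (\<forall>x y. d (x + y) = d x + d y) \<and> (\<forall>q\<in>atoms M. d q = of_bool (q = p))"
    and "F \<in> factorizations M a" "G \<in> factorizations M a"
  shows "F = G"
proof (rule multiset_eqI)
  fix p
  show "count F p = count G p"
  proof (cases "p \<in> atoms M")
    case True
    then obtain d :: "'a \<Rightarrow> int" where d_add: "\<And>x y. d (x + y) = d x + d y"
      and d_atoms: "\<And>q. q \<in> atoms M \<Longrightarrow> d q = of_bool (q = p)"
      using duals by blast
    have "d a = int (count H p)" if "H \<in> factorizations M a" for H
    proof -
      have "d a = (\<Sum>q\<in>#H. d q)"
        using that additive_sum_mset[of d H] d_add by (simp add: factorizations_def)
      also have "\<dots> = (\<Sum>q\<in>#H. of_bool (q = p))"
        using that d_atoms by (intro arg_cong[where f = sum_mset] image_mset_cong)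
          (auto simp: factorizations_def)
      also have "\<dots> = int (count H p)"
        by (induction H) auto
      finally show ?thesis .
    qed
    then show ?thesis using assms(2,3) by (metis of_nat_eq_iff)
  next
    case False
    then have "p \<notin># F" "p \<notin># G"
      using assms(2,3) by (auto simp: factorizations_def)
    then show ?thesis by (simp add: not_in_iff)
  qed
qed

lemma not_half_factorial_if_atom_relation:
  assumes "p \<in> atoms M" "q \<in> atoms M" "c \<in> atoms M" "u \<in> atoms M" "w \<in> atoms M"
    and "p + q \<in> M" "p + q = c + u + w"
  shows "\<not> half_factorial M"
proof -
  have "{#p, q#} \<in> factorizations M (p + q)" "{#c, u, w#} \<in> factorizations M (p + q)"
    using assms by (simp_all add: factorizations_def add.assoc)
  then show ?thesis
    using assms(6) unfolding half_factorial_def by force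
qed

lemma factorial_imp_half_factorial: "factorial M \<Longrightarrow> half_factorial M"
  by (auto simp: factorial_def half_factorial_def)

section \<open>Agglomerations of subgraphs\<close>

definition subgraph_agg :: "'v set \<Rightarrow> 'e set \<Rightarrow> 'v + 'e \<Rightarrow> nat" where
  "subgraph_agg W F = case_sum (\<lambda>v. of_bool (v \<in> W)) (\<lambda>e. of_bool (e \<in> F))"

lemma subgraph_agg_simps [simp]:
  "subgraph_agg W F (Inl v) = of_bool (v \<in> W)"
  "subgraph_agg W F (Inr e) = of_bool (e \<in> F)"
  by (simp_all add: subgraph_agg_def)

lemma subgraph_agg_eq_iff: "subgraph_agg W F = subgraph_agg W' F' \<longleftrightarrow> W = W' \<and> F = F'"
  by (auto simp: fun_eq_iff split_sum_all)

lemma subgraph_agg_eq_0_iff: "subgraph_agg W F = 0 \<longleftrightarrow> W = {} \<and> F = {}"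
  by (auto simp: fun_eq_iff split_sum_all)

lemma subgraph_agg_add_eq_iff:
  "subgraph_agg W1 F1 + subgraph_agg W2 F2 = subgraph_agg W F \<longleftrightarrow>
     W1 \<inter> W2 = {} \<and> F1 \<inter> F2 = {} \<and> W = W1 \<union> W2 \<and> F = F1 \<union> F2"
  by (auto simp: fun_eq_iff split_sum_all of_bool_def split: if_splits)

locale multigraph =
  fixes V :: "'v set" and E :: "'e set" and r :: "'e \<Rightarrow> 'v set"
  assumes graph: "graph V E r"
begin

abbreviation A :: "('v + 'e \<Rightarrow> nat) set" where
  "A \<equiv> agglomerations V E r"

lemma finite_V: "finite V" and finite_E: "finite E"
  and endpoints_subset: "e \<in> E \<Longrightarrow> r e \<subseteq> V"
  and card_endpoints: "e \<in> E \<Longrightarrow> card (r e) = 2"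
  using graph by (auto simp: graph_def)

lemma endpoints_cases:
  assumes "e \<in> E" obtains u w where "r e = {u, w}" "u \<noteq> w"
  using card_endpoints[OF assms] by (auto simp: card_2_iff)

lemma endpoints_eq:
  assumes "e \<in> E" "u \<in> r e" "w \<in> r e" "u \<noteq> w"
  shows "r e = {u, w}"
  using assms by (cases rule: endpoints_cases[OF assms(1)]) auto

lemma endpoints_cases_at:
  assumes "e \<in> E" "v \<in> r e"
  obtains x where "r e = {v, x}" "v \<noteq> x"
  using endpoints_cases[OF assms(1)] assms(2) by (metis insert_commute insertE singletonD)

lemma endpoints_nonempty: "e \<in> E \<Longrightarrow> r e \<noteq> {}"
  using card_endpoints by fastforce

lemma agglomerations_add: "a \<in> A \<Longrightarrow> b \<in> A \<Longrightarrow> a + b \<in> A"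
  by (auto simp: agglomerations_def add_mono)

definition is_subgraph :: "'v set \<Rightarrow> 'e set \<Rightarrow> bool" where
  "is_subgraph W F \<longleftrightarrow> W \<subseteq> V \<and> F \<subseteq> E \<and> (\<forall>e\<in>F. r e \<subseteq> W)"

lemma is_subgraph_finite: "is_subgraph W F \<Longrightarrow> finite W \<and> finite F"
  using finite_V finite_E by (auto simp: is_subgraph_def intro: finite_subset)

lemma subgraph_agg_in_agglomerations: "is_subgraph W F \<Longrightarrow> subgraph_agg W F \<in> A"
  by (auto simp: is_subgraph_def agglomerations_def)

lemma subgraph_agg_eq_0_iff_vertices:
  "is_subgraph W F \<Longrightarrow> subgraph_agg W F = 0 \<longleftrightarrow> W = {}"
  by (auto simp: is_subgraph_def subgraph_agg_eq_0_iff) (use endpoints_nonempty in blast)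

lemma agglomeration_le_1_cases:
  assumes "a \<in> A" "\<And>x. a x \<le> 1"
  obtains W F where "is_subgraph W F" "a = subgraph_agg W F"
proof
  let ?W = "{v. a (Inl v) = 1}" and ?F = "{e. a (Inr e) = 1}"
  have "a x = of_bool (a x = 1)" for x
    using assms(2)[of x] by auto
  then show "a = subgraph_agg ?W ?F"
    by (auto simp: fun_eq_iff split_sum_all)
  have "r e \<subseteq> ?W" if "e \<in> ?F" for e
    using that assms by (force simp: agglomerations_def intro: antisym)
  moreover have "?W \<subseteq> V" "?F \<subseteq> E"
    using assms(1) by (auto simp: agglomerations_def)
  ultimately show "is_subgraph ?W ?F"
    by (auto simp: is_subgraph_def)
qed

lemma atom_subgraph_agg_cases:
  assumes "q \<in> atoms A"
  obtains W F where "is_subgraph W F" "q = subgraph_agg W F"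
proof -
  have q: "q \<in> A" "q \<noteq> 0" using assms by (auto simp: atoms_def)
  define b where "b = (\<lambda>x. min 1 (q x))"
  define c where "c = (\<lambda>x. q x - 1)"
  have "q = b + c" by (auto simp: b_def c_def fun_eq_iff)
  moreover have "b \<in> A" "c \<in> A"
    using q(1) by (auto simp: b_def c_def agglomerations_def min.coboundedI2 diff_le_mono)
  moreover have "b \<noteq> 0"
    using q(2) by (auto simp: b_def fun_eq_iff Suc_le_eq)
  ultimately have "q = b" using assms by (auto simp: atoms_def)
  moreover have "b x \<le> 1" for x by (simp add: b_def)
  ultimately show ?thesis using that agglomeration_le_1_cases q(1) by metis
qed

section \<open>Atoms and decompositions of subgraphs\<close>

definition splits :: "'v set \<Rightarrow> 'e set \<Rightarrow> 'v set \<Rightarrow> 'e set \<Rightarrow> 'v set \<Rightarrow> 'e set \<Rightarrow> bool" where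
  "splits W F W1 F1 W2 F2 \<longleftrightarrow> is_subgraph W1 F1 \<and> is_subgraph W2 F2 \<and> W1 \<noteq> {} \<and> W2 \<noteq> {} \<and>
     W1 \<inter> W2 = {} \<and> W = W1 \<union> W2 \<and> F = F1 \<union> F2"

definition decomposable :: "'v set \<Rightarrow> 'e set \<Rightarrow> bool" where
  "decomposable W F \<longleftrightarrow> (\<exists>W1 F1 W2 F2. splits W F W1 F1 W2 F2)"

lemma splits_sym: "splits W F W1 F1 W2 F2 \<Longrightarrow> splits W F W2 F2 W1 F1"
  by (auto simp: splits_def)

lemma splits_edges_disjoint:
  assumes "splits W F W1 F1 W2 F2"
  shows "F1 \<inter> F2 = {}"
proof -
  have "r e \<subseteq> W1 \<inter> W2" "r e \<noteq> {}" if "e \<in> F1" "e \<in> F2" for e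
    using assms that endpoints_nonempty unfolding splits_def is_subgraph_def by blast+
  then show ?thesis
    using assms unfolding splits_def by blast
qed

lemma splits_subgraph_agg:
  "splits W F W1 F1 W2 F2 \<Longrightarrow> subgraph_agg W F = subgraph_agg W1 F1 + subgraph_agg W2 F2"
  using splits_edges_disjoint subgraph_agg_add_eq_iff by (metis splits_def)

lemma splits_card:
  assumes "splits W F W1 F1 W2 F2"
  shows "card W = card W1 + card W2" "card F = card F1 + card F2"
  using assms splits_edges_disjoint[OF assms] is_subgraph_finite
  by (auto simp: splits_def card_Un_disjoint)

lemma splits_insert_edge:
  "splits W F W1 F1 W2 F2 \<Longrightarrow> e \<in> E \<Longrightarrow> r e \<subseteq> W1 \<Longrightarrow> splits W (insert e F) W1 (insert e F1) W2 F2"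
  by (auto simp: splits_def is_subgraph_def)

lemma splits_regroup:
  "splits W F W1 F1 W2 F2 \<Longrightarrow> splits W1 F1 W11 F11 W12 F12 \<Longrightarrow> e \<in> E \<Longrightarrow> r e \<subseteq> W11 \<union> W2 \<Longrightarrow>
    splits W (insert e F) W12 F12 (W11 \<union> W2) (insert e (F11 \<union> F2))"
  by (auto simp: splits_def is_subgraph_def)

lemma subgraph_agg_in_atoms_iff:
  assumes "is_subgraph W F"
  shows "subgraph_agg W F \<in> atoms A \<longleftrightarrow> W \<noteq> {} \<and> \<not> decomposable W F"
proof
  assume atom: "subgraph_agg W F \<in> atoms A"
  have "\<not> splits W F W1 F1 W2 F2" for W1 F1 W2 F2
  proof
    assume sp: "splits W F W1 F1 W2 F2"
    then have "subgraph_agg W1 F1 \<in> A" "subgraph_agg W2 F2 \<in> A"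
      "subgraph_agg W1 F1 \<noteq> 0" "subgraph_agg W2 F2 \<noteq> 0"
      by (auto simp: splits_def subgraph_agg_in_agglomerations subgraph_agg_eq_0_iff_vertices)
    then show False
      using atom splits_subgraph_agg[OF sp] by (auto simp: atoms_def)
  qed
  then show "W \<noteq> {} \<and> \<not> decomposable W F"
    using atom subgraph_agg_eq_0_iff_vertices[OF assms] by (auto simp: atoms_def decomposable_def)
next
  assume W: "W \<noteq> {} \<and> \<not> decomposable W F"
  have "b = 0 \<or> c = 0" if bc: "b \<in> A" "c \<in> A" "subgraph_agg W F = b + c" for b c
  proof -
    have "b x + c x \<le> 1" for x
      using fun_cong[OF bc(3), of x] by (cases x) (auto simp: of_bool_def split: if_splits)
    then have "b x \<le> 1" "c x \<le> 1" for x
      by (metis add_leD1 add_leD2)+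
    then obtain W1 F1 W2 F2 where sub: "is_subgraph W1 F1" "b = subgraph_agg W1 F1"
      "is_subgraph W2 F2" "c = subgraph_agg W2 F2"
      using agglomeration_le_1_cases bc(1,2) by metis
    then have parts: "W1 \<inter> W2 = {} \<and> W = W1 \<union> W2 \<and> F = F1 \<union> F2"
      using bc(3) subgraph_agg_add_eq_iff by metis
    have "W1 = {} \<or> W2 = {}"
    proof (rule ccontr)
      assume "\<not> (W1 = {} \<or> W2 = {})"
      then have "splits W F W1 F1 W2 F2"
        using sub parts by (auto simp: splits_def)
      then show False
        using W by (auto simp: decomposable_def)
    qed
    then show ?thesis
      using sub subgraph_agg_eq_0_iff_vertices by auto
  qed
  then show "subgraph_agg W F \<in> atoms A"
    using W assms
    by (auto simp: atoms_def subgraph_agg_in_agglomerations subgraph_agg_eq_0_iff_vertices)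
qed

lemma splits_reachable_stays_in_part:
  assumes "splits W F W1 F1 W2 F2" "z \<in> W1" "(z, x) \<in> (adj_rel V F r)\<^sup>*"
  shows "x \<in> W1"
  using assms(3)
proof (induction rule: rtrancl_induct)
  case base
  show ?case using assms(2) .
next
  case (step y x)
  then obtain f where "f \<in> F" "r f = {y, x}"
    by (auto simp: adj_rel_def)
  then show ?case
    using step.IH assms(1) unfolding splits_def is_subgraph_def by blast
qed

lemma not_decomposable_if_reachable:
  assumes "z \<in> W" "\<forall>x\<in>W. (z, x) \<in> (adj_rel V F r)\<^sup>*"
  shows "\<not> decomposable W F"
proof
  assume "decomposable W F"
  then obtain W1 F1 W2 F2 where sp: "splits W F W1 F1 W2 F2"
    by (auto simp: decomposable_def)
  have "W \<subseteq> W1" if "splits W F W1 F1 W2 F2" "z \<in> W1" for W1 F1 W2 F2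
    using that assms(2) splits_reachable_stays_in_part by blast
  moreover have "z \<in> W1 \<or> z \<in> W2"
    using sp assms(1) by (auto simp: splits_def)
  ultimately show False
    using sp splits_sym[OF sp] unfolding splits_def by blast
qed

lemma connected_subgraph_atom:
  assumes "is_subgraph W F" "z \<in> W" "\<forall>x\<in>W. (z, x) \<in> (adj_rel V F r)\<^sup>*"
  shows "subgraph_agg W F \<in> atoms A"
  using assms not_decomposable_if_reachable subgraph_agg_in_atoms_iff by blast

lemma vertex_atom: "v \<in> V \<Longrightarrow> subgraph_agg {v} {} \<in> atoms A"
  by (rule connected_subgraph_atom) (auto simp: is_subgraph_def)

lemma edge_atom:
  assumes "e \<in> E"
  shows "subgraph_agg (r e) {e} \<in> atoms A"
proof -
  obtain u w where uw: "r e = {u, w}"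
    using endpoints_cases assms by blast
  then have "(u, w) \<in> adj_rel V {e} r"
    by (auto simp: adj_rel_def)
  then show ?thesis
    using uw assms endpoints_subset
    by (intro connected_subgraph_atom[of _ _ u]) (auto simp: is_subgraph_def)
qed

lemma edgeless_not_decomposable_singleton:
  assumes "is_subgraph W {}" "\<not> decomposable W {}" "v \<in> W"
  shows "W = {v}"
proof (rule ccontr)
  assume "W \<noteq> {v}"
  then have "splits W {} {v} {} (W - {v}) {}"
    using assms by (auto simp: splits_def is_subgraph_def)
  with assms(2) show False
    by (auto simp: decomposable_def)
qed

lemma splits_part_not_decomposable:
  assumes sp: "splits W F W1 F1 W2 F2" and e: "e \<in> E" "r e \<subseteq> W"
    and nd: "\<not> decomposable W (insert e F)"
  shows "\<not> decomposable W1 F1"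
proof
  assume "decomposable W1 F1"
  then obtain W11 F11 W12 F12 where sp1: "splits W1 F1 W11 F11 W12 F12"
    by (auto simp: decomposable_def)
  have "\<not> r e \<subseteq> W1" "\<not> r e \<subseteq> W2"
    using splits_insert_edge[OF sp e(1)] splits_insert_edge[OF splits_sym[OF sp] e(1)] nd
    unfolding decomposable_def by blast+
  then obtain u w where u: "u \<in> r e" "u \<notin> W2" and w: "w \<in> r e" "w \<notin> W1"
    by blast
  then have "u \<in> W1" "w \<in> W2"
    using e(2) sp by (auto simp: splits_def)
  moreover have "r e = {u, w}"
    using endpoints_eq[OF e(1) u(1) w(1)] \<open>u \<in> W1\<close> w(2) by blast
  ultimately have "r e \<subseteq> W11 \<union> W2 \<or> r e \<subseteq> W12 \<union> W2"
    using sp1 by (auto simp: splits_def)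
  then show False
    using splits_regroup[OF sp sp1 e(1)] splits_regroup[OF sp splits_sym[OF sp1] e(1)] nd
    unfolding decomposable_def by blast
qed

lemma card_vertices_le_if_not_decomposable:
  assumes "is_subgraph W F" "\<not> decomposable W F"
  shows "card W \<le> card F + 1"
proof -
  have "finite F" using is_subgraph_finite[OF assms(1)] by simp
  then show ?thesis
    using assms
  proof (induction F arbitrary: W rule: finite_psubset_induct)
    case (psubset F)
    show ?case
    proof (cases "F = {}")
      case True
      then have "W = {} \<or> (\<exists>v. W = {v})"
        using edgeless_not_decomposable_singleton psubset.prems by blast
      then show ?thesis by auto
    next
      case False
      then obtain e where "e \<in> F" by blast
      define F' where "F' = F - {e}"
      have F: "F = insert e F'" "F' \<subset> F" "card F = Suc (card F')"
        using \<open>e \<in> F\<close> card_Suc_Diff1[OF psubset.hyps \<open>e \<in> F\<close>] by (auto simp: F'_def)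
      have e: "e \<in> E" "r e \<subseteq> W" and sub': "is_subgraph W F'"
        using psubset.prems(1) \<open>e \<in> F\<close> by (auto simp: is_subgraph_def F'_def)
      show ?thesis
      proof (cases "decomposable W F'")
        case False
        then show ?thesis
          using psubset.IH[OF F(2) sub'] F(3) by simp
      next
        case True
        then obtain W1 F1 W2 F2 where sp: "splits W F' W1 F1 W2 F2"
          by (auto simp: decomposable_def)
        have "\<not> decomposable W (insert e F')"
          using psubset.prems(2) F(1) by simp
        then have "\<not> decomposable W1 F1" "\<not> decomposable W2 F2"
          using splits_part_not_decomposable[OF sp e] splits_part_not_decomposable[OF splits_sym[OF sp] e]
          by blast+
        moreover have "F1 \<subset> F" "F2 \<subset> F" "is_subgraph W1 F1" "is_subgraph W2 F2"
          using sp F(1,2) by (auto simp: splits_def)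
        ultimately have "card W1 \<le> card F1 + 1" "card W2 \<le> card F2 + 1"
          using psubset.IH by blast+
        then show ?thesis
          using splits_card[OF sp] F(3) by simp
      qed
    qed
  qed
qed

lemma atom_card_vertices_le:
  "is_subgraph W F \<Longrightarrow> subgraph_agg W F \<in> atoms A \<Longrightarrow> card W \<le> card F + 1"
  using card_vertices_le_if_not_decomposable subgraph_agg_in_atoms_iff by blast

section \<open>Acyclic graphs and half-factoriality\<close>

lemma decomposable_if_not_reachable:
  assumes "is_subgraph W F" "u \<in> W" "w \<in> W" "(u, w) \<notin> (adj_rel V F r)\<^sup>*"
  shows "decomposable W F"
proof -
  define T where "T = {x \<in> W. (u, x) \<in> (adj_rel V F r)\<^sup>*}"
  have "r f \<subseteq> T \<or> r f \<subseteq> W - T" if "f \<in> F" for f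
  proof -
    have f: "f \<in> E" "r f \<subseteq> W"
      using that assms(1) by (auto simp: is_subgraph_def)
    then obtain a b where ab: "r f = {a, b}"
      using endpoints_cases by blast
    then have "(a, b) \<in> adj_rel V F r" "(b, a) \<in> adj_rel V F r"
      using that by (auto simp: adj_rel_def insert_commute)
    then have "a \<in> T \<longleftrightarrow> b \<in> T"
      using ab f(2) by (auto simp: T_def intro: rtrancl_into_rtrancl)
    then show ?thesis
      using ab f(2) by (auto simp: T_def)
  qed
  then have "splits W F T {f \<in> F. r f \<subseteq> T} (W - T) {f \<in> F. r f \<subseteq> W - T}"
    using assms by (auto simp: splits_def is_subgraph_def T_def)
  then show ?thesis
    by (auto simp: decomposable_def)
qed

definition is_path :: "'v list \<Rightarrow> 'e list \<Rightarrow> bool" where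
  "is_path xs fs \<longleftrightarrow> length xs = Suc (length fs) \<and> distinct xs \<and> set xs \<subseteq> V \<and> set fs \<subseteq> E \<and>
     (\<forall>i<length fs. r (fs ! i) = {xs ! i, xs ! Suc i})"

lemma simple_path_exists:
  assumes "(u, w) \<in> (adj_rel V G r)\<^sup>*" "G \<subseteq> E" "u \<in> V"
  shows "\<exists>xs fs. is_path xs fs \<and> set fs \<subseteq> G \<and> xs ! 0 = u \<and> xs ! length fs = w"
  using assms(1)
proof (induction rule: rtrancl_induct)
  case base
  have "is_path [u] []"
    using assms(3) by (simp add: is_path_def)
  then show ?case by force
next
  case (step y z)
  obtain xs fs where P: "is_path xs fs" "set fs \<subseteq> G" "xs ! 0 = u" "xs ! length fs = y"
    using step.IH by blast
  obtain f where f: "f \<in> G" "r f = {y, z}"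
    using step.hyps(2) by (auto simp: adj_rel_def)
  show ?case
  proof (cases "z \<in> set xs")
    case True
    then obtain i where i: "i < length xs" "xs ! i = z"
      by (auto simp: in_set_conv_nth)
    have "is_path (take (Suc i) xs) (take i fs)"
      using P(1) i(1) by (auto simp: is_path_def dest: in_set_takeD)
    moreover have "set (take i fs) \<subseteq> G"
      using P(2) by (auto dest: in_set_takeD)
    moreover have "length (take i fs) = i"
      using P(1) i(1) by (simp add: is_path_def)
    ultimately show ?thesis
      using P(3) i by (intro exI[of _ "take (Suc i) xs"] exI[of _ "take i fs"]) simp
  next
    case False
    have "z \<in> V"
      using f assms(2) endpoints_subset by blast
    then have "is_path (xs @ [z]) (fs @ [f])"
      using P(1,4) False f assms(2) by (auto simp: is_path_def nth_append less_Suc_eq)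
    then show ?thesis
      using P f(1) by (intro exI[of _ "xs @ [z]"] exI[of _ "fs @ [f]"])
        (auto simp: is_path_def nth_append)
  qed
qed

lemma path_edges_distinct:
  assumes "is_path xs fs"
  shows "distinct fs"
  unfolding distinct_conv_nth
proof (intro allI impI)
  fix i j assume ij: "i < length fs" "j < length fs" "i \<noteq> j"
  show "fs ! i \<noteq> fs ! j"
  proof
    assume "fs ! i = fs ! j"
    then have "{xs ! i, xs ! Suc i} = {xs ! j, xs ! Suc j}"
      using assms ij by (metis is_path_def)
    then show False
      using assms ij by (auto simp: is_path_def doubleton_eq_iff nth_eq_iff_index_eq)
  qed
qed

lemma path_close_cycle:
  assumes "is_path xs fs" "fs \<noteq> []" "e \<in> E" "e \<notin> set fs" "r e = {xs ! length fs, xs ! 0}"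
  shows "is_cycle V E r xs (fs @ [e])"
  unfolding is_cycle_def
proof (intro conjI allI impI)
  fix i assume "i < length xs"
  then consider "i < length fs" | "i = length fs"
    using assms(1) by (force simp: is_path_def)
  then show "r ((fs @ [e]) ! i) = {xs ! i, xs ! ((i + 1) mod length xs)}"
    by cases (use assms(1,5) in \<open>auto simp: is_path_def nth_append\<close>)
qed (use assms path_edges_distinct[OF assms(1)] in \<open>auto simp: is_path_def Suc_le_eq\<close>)

lemma acyclic_edge_not_bypassed:
  assumes "graph_acyclic V E r" "e \<in> E" "r e = {u, w}" "u \<noteq> w" "G \<subseteq> E - {e}"
  shows "(u, w) \<notin> (adj_rel V G r)\<^sup>*"
proof
  assume "(u, w) \<in> (adj_rel V G r)\<^sup>*"
  moreover have "u \<in> V"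
    using assms(2,3) endpoints_subset by blast
  ultimately obtain xs fs where P: "is_path xs fs" "set fs \<subseteq> G" "xs ! 0 = u" "xs ! length fs = w"
    using simple_path_exists assms(5) by blast
  have "fs \<noteq> []" "e \<notin> set fs"
    using P(2-4) assms(4,5) by auto
  then have "is_cycle V E r xs (fs @ [e])"
    using path_close_cycle[OF P(1)] P(3,4) assms(2,3) by (simp add: insert_commute)
  then show False
    using assms(1) by (auto simp: graph_acyclic_def)
qed

lemma acyclic_card_vertices_ge:
  assumes "graph_acyclic V E r" "is_subgraph W F" "W \<noteq> {}"
  shows "card F + 1 \<le> card W"
proof -
  have "finite F" using is_subgraph_finite[OF assms(2)] by simp
  then show ?thesis
    using assms(2,3)
  proof (induction F arbitrary: W rule: finite_psubset_induct)
    case (psubset F)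
    show ?case
    proof (cases "F = {}")
      case True
      then show ?thesis
        using psubset.prems is_subgraph_finite by (simp add: Suc_le_eq card_gt_0_iff)
    next
      case False
      then obtain e where "e \<in> F" by blast
      define F' where "F' = F - {e}"
      have F: "F' \<subset> F" "card F = Suc (card F')"
        using \<open>e \<in> F\<close> card_Suc_Diff1[OF psubset.hyps \<open>e \<in> F\<close>] by (auto simp: F'_def)
      have e: "e \<in> E" "r e \<subseteq> W" and sub': "is_subgraph W F'"
        using psubset.prems(1) \<open>e \<in> F\<close> by (auto simp: is_subgraph_def F'_def)
      obtain u w where uw: "r e = {u, w}" "u \<noteq> w"
        using endpoints_cases e(1) by blast
      have "(u, w) \<notin> (adj_rel V F' r)\<^sup>*"
        using acyclic_edge_not_bypassed[OF assms(1) e(1) uw] sub'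
        by (auto simp: is_subgraph_def F'_def)
      then have "decomposable W F'"
        using decomposable_if_not_reachable[OF sub'] uw e(2) by blast
      then obtain W1 F1 W2 F2 where sp: "splits W F' W1 F1 W2 F2"
        by (auto simp: decomposable_def)
      then have "F1 \<subset> F" "F2 \<subset> F" "is_subgraph W1 F1" "is_subgraph W2 F2" "W1 \<noteq> {}" "W2 \<noteq> {}"
        using F(1) by (auto simp: splits_def)
      then have "card F1 + 1 \<le> card W1" "card F2 + 1 \<le> card W2"
        using psubset.IH by blast+
      then show ?thesis
        using splits_card[OF sp] F(2) by simp
    qed
  qed
qed

definition euler_char :: "('v + 'e \<Rightarrow> nat) \<Rightarrow> int" where
  "euler_char a = (\<Sum>v\<in>V. int (a (Inl v))) - (\<Sum>e\<in>E. int (a (Inr e)))"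

lemma euler_char_add: "euler_char (a + b) = euler_char a + euler_char b"
  by (simp add: euler_char_def sum.distrib)

lemma euler_char_subgraph_agg:
  assumes "is_subgraph W F"
  shows "euler_char (subgraph_agg W F) = int (card W) - int (card F)"
proof -
  have "V \<inter> W = W" "E \<inter> F = F"
    using assms by (auto simp: is_subgraph_def)
  then show ?thesis
    using finite_V finite_E by (simp add: euler_char_def)
qed

lemma acyclic_imp_half_factorial:
  assumes "graph_acyclic V E r"
  shows "half_factorial A"
proof (rule half_factorial_if_length_function)
  show "euler_char (a + b) = euler_char a + euler_char b" for a b
    by (rule euler_char_add)
  fix q assume q: "q \<in> atoms A"
  then obtain W F where sub: "is_subgraph W F" and q_eq: "q = subgraph_agg W F"
    by (rule atom_subgraph_agg_cases)
  then have "card W \<le> card F + 1" "W \<noteq> {}"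
    using q atom_card_vertices_le subgraph_agg_in_atoms_iff by blast+
  moreover have "card F + 1 \<le> card W"
    using acyclic_card_vertices_ge[OF assms sub] \<open>W \<noteq> {}\<close> .
  ultimately show "euler_char q = 1"
    using euler_char_subgraph_agg[OF sub] q_eq by simp
qed

lemma cycle_subgraph:
  assumes "is_cycle V E r vs es"
  shows "is_subgraph (set vs) (set es)"
  unfolding is_subgraph_def
proof (intro conjI ballI)
  fix f assume "f \<in> set es"
  then obtain i where "i < length vs" "f = es ! i"
    using assms by (auto simp: is_cycle_def in_set_conv_nth)
  moreover have "vs ! (Suc i mod length vs) \<in> set vs"
    using \<open>i < length vs\<close> by (intro nth_mem mod_less_divisor) auto
  ultimately show "r f \<subseteq> set vs"
    using assms by (auto simp: is_cycle_def)
qed (use assms in \<open>auto simp: is_cycle_def\<close>)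

lemma cycle_path_reachable:
  assumes "is_cycle V E r vs es" "i < length vs"
  shows "(vs ! 0, vs ! i) \<in> (adj_rel V (set (take (length vs - 1) es)) r)\<^sup>*"
  using assms(2)
proof (induction i)
  case 0
  show ?case by simp
next
  case (Suc i)
  then have "r (es ! i) = {vs ! i, vs ! Suc i}"
    using assms(1) by (auto simp: is_cycle_def)
  moreover have "es ! i \<in> set (take (length vs - 1) es)"
    using Suc.prems assms(1) by (auto simp: is_cycle_def in_set_conv_nth intro!: exI[of _ i])
  ultimately have "(vs ! i, vs ! Suc i) \<in> adj_rel V (set (take (length vs - 1) es)) r"
    by (auto simp: adj_rel_def)
  with Suc show ?case
    by (meson Suc_lessD rtrancl_into_rtrancl)
qed

lemma cycle_not_half_factorial:
  assumes cycle: "is_cycle V E r vs es"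
  shows "\<not> half_factorial A"
proof -
  define n where "n = length vs - 1"
  define e where "e = es ! n"
  define P where "P = set (take n es)"
  have len: "length vs = Suc n" "length es = Suc n" "0 < n"
    using cycle by (auto simp: is_cycle_def n_def)
  have es: "es = take n es @ [e]"
    using len(2) by (metis e_def lessI take_Suc_conv_app_nth take_all order_refl)
  have "distinct (take n es @ [e])"
    using cycle es by (metis is_cycle_def)
  then have es_set: "set es = insert e P" "e \<notin> P"
    using arg_cong[OF es, of set] by (auto simp: P_def)
  have e_ends: "r e = {vs ! n, vs ! 0}" and e_in: "e \<in> E"
    using cycle len es_set(1) by (auto simp: is_cycle_def e_def)
  have ends: "vs ! 0 \<in> set vs" "vs ! n \<in> set vs" "vs ! 0 \<noteq> vs ! n"
    using cycle len by (auto simp: is_cycle_def nth_eq_iff_index_eq)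
  have sub: "is_subgraph (set vs) P" "is_subgraph (set vs) (set es)"
    using cycle_subgraph[OF cycle] es_set(1) by (auto simp: is_subgraph_def)
  have reach: "(vs ! 0, x) \<in> (adj_rel V P r)\<^sup>*" if "x \<in> set vs" for x
    using that cycle_path_reachable[OF cycle] by (auto simp: in_set_conv_nth P_def n_def)
  then have reach_all: "(vs ! 0, x) \<in> (adj_rel V (set es) r)\<^sup>*" if "x \<in> set vs" for x
    using that es_set(1) rtrancl_mono[of "adj_rel V P r" "adj_rel V (set es) r"]
    by (auto simp: adj_rel_def)
  let ?path = "subgraph_agg (set vs) P" and ?edge = "subgraph_agg (r e) {e}"
    and ?cycle = "subgraph_agg (set vs) (set es)"
    and ?v0 = "subgraph_agg {vs ! 0} {}" and ?vn = "subgraph_agg {vs ! n} {}"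
  have atoms: "?path \<in> atoms A" "?edge \<in> atoms A" "?cycle \<in> atoms A" "?v0 \<in> atoms A" "?vn \<in> atoms A"
    using connected_subgraph_atom[OF sub(1) ends(1)] connected_subgraph_atom[OF sub(2) ends(1)]
      reach reach_all edge_atom[OF e_in] vertex_atom ends(1,2) sub(1)
    by (auto simp: is_subgraph_def)
  moreover have "?path + ?edge \<in> A"
    using atoms agglomerations_add by (auto simp: atoms_def)
  moreover have "?path + ?edge = ?cycle + ?v0 + ?vn"
    using ends es_set by (auto simp: fun_eq_iff split_sum_all e_ends)
  ultimately show ?thesis
    by (rule not_half_factorial_if_atom_relation)
qed

theorem half_factorial_iff_acyclic: "half_factorial A \<longleftrightarrow> graph_acyclic V E r"
  using acyclic_imp_half_factorial cycle_not_half_factorial by (auto simp: graph_acyclic_def)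

section \<open>Matchings and factoriality\<close>

definition vertex_mass :: "('v + 'e \<Rightarrow> nat) \<Rightarrow> nat" where
  "vertex_mass a = (\<Sum>v\<in>V. a (Inl v))"

lemma vertex_mass_add: "vertex_mass (a + b) = vertex_mass a + vertex_mass b"
  by (simp add: vertex_mass_def sum.distrib)

lemma vertex_mass_pos:
  assumes "a \<in> A" "a \<noteq> 0"
  shows "0 < vertex_mass a"
proof -
  obtain x where x: "a x \<noteq> 0"
    using assms(2) by (auto simp: fun_eq_iff)
  obtain v where v: "v \<in> V" "a (Inl v) \<noteq> 0"
  proof (cases x)
    case (Inl v)
    moreover have "v \<in> V"
      using assms(1) x Inl by (auto simp: agglomerations_def)
    ultimately show ?thesis
      using that x by simp
  next
    case (Inr e)
    then have "e \<in> E"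
      using assms(1) x by (auto simp: agglomerations_def)
    moreover obtain v where "v \<in> r e"
      using endpoints_nonempty[OF \<open>e \<in> E\<close>] by blast
    ultimately show ?thesis
      using that assms(1) x Inr endpoints_subset by (force simp: agglomerations_def)
  qed
  have "a (Inl v) \<le> vertex_mass a"
    unfolding vertex_mass_def using finite_V v(1) by (intro member_le_sum) auto
  then show ?thesis
    using v(2) by simp
qed

lemma agglomeration_factorization_exists: "a \<in> A \<Longrightarrow> \<exists>F. F \<in> factorizations A a"
  by (rule factorization_exists[of A vertex_mass])
    (auto simp: vertex_mass_add vertex_mass_pos)

definition is_matching :: bool where
  "is_matching \<longleftrightarrow> (\<forall>e\<in>E. \<forall>f\<in>E. r e \<inter> r f \<noteq> {} \<longrightarrow> e = f)"

lemma matching_not_decomposable_edge: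
  assumes "is_matching" "is_subgraph W F" "\<not> decomposable W F" "e \<in> F"
  shows "W = r e \<and> F = {e}"
proof -
  have e: "e \<in> E" "r e \<subseteq> W"
    using assms(2,4) by (auto simp: is_subgraph_def)
  have "r f \<inter> r e = {}" if "f \<in> F - {e}" for f
    using assms(1,2) that e(1) unfolding is_matching_def is_subgraph_def by blast
  then have rest: "is_subgraph (W - r e) (F - {e})"
    using assms(2) by (auto simp: is_subgraph_def)
  have "W - r e = {}"
  proof (rule ccontr)
    assume "W - r e \<noteq> {}"
    then have "splits W F (r e) {e} (W - r e) (F - {e})"
      using rest e assms(4) endpoints_nonempty endpoints_subset
      by (auto simp: splits_def is_subgraph_def)
    with assms(3) show False
      by (auto simp: decomposable_def)
  qed
  moreover have "F - {e} = {}"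
    using rest calculation endpoints_nonempty unfolding is_subgraph_def by blast
  ultimately show ?thesis
    using e(2) assms(4) by auto
qed

lemma matching_atom_cases:
  assumes "is_matching" "q \<in> atoms A"
  obtains (vertex) v where "v \<in> V" "q = subgraph_agg {v} {}"
    | (edge) e where "e \<in> E" "q = subgraph_agg (r e) {e}"
proof -
  obtain W F where sub: "is_subgraph W F" and q: "q = subgraph_agg W F"
    using assms(2) by (rule atom_subgraph_agg_cases)
  then have W: "W \<noteq> {}" "\<not> decomposable W F"
    using subgraph_agg_in_atoms_iff assms(2) by blast+
  show ?thesis
  proof (cases "F = {}")
    case True
    then obtain v where "W = {v}"
      using W edgeless_not_decomposable_singleton sub by blast
    then show ?thesis
      using vertex sub q True by (auto simp: is_subgraph_def)
  next
    case False
    then obtain e where "e \<in> F" by blast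
    then show ?thesis
      using matching_not_decomposable_edge[OF assms(1) sub W(2)] edge sub q
      by (auto simp: is_subgraph_def)
  qed
qed

lemma matching_atom_dual:
  assumes "is_matching" "p \<in> atoms A"
  shows "\<exists>d :: ('v + 'e \<Rightarrow> nat) \<Rightarrow> int.
    (\<forall>x y. d (x + y) = d x + d y) \<and> (\<forall>q\<in>atoms A. d q = of_bool (q = p))"
  using assms
proof (cases rule: matching_atom_cases)
  case (vertex v)
  define d :: "('v + 'e \<Rightarrow> nat) \<Rightarrow> int" where
    "d a = int (a (Inl v)) - (\<Sum>e\<in>{e\<in>E. v \<in> r e}. int (a (Inr e)))" for a
  have "d q = of_bool (q = p)" if "q \<in> atoms A" for q
    using assms(1) that
  proof (cases rule: matching_atom_cases)
    case (vertex w)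
    then show ?thesis
      using \<open>p = subgraph_agg {v} {}\<close> by (simp add: d_def subgraph_agg_eq_iff)
  next
    case (edge f)
    have "(\<Sum>e\<in>{e\<in>E. v \<in> r e}. of_bool (e = f) :: int) = of_bool (v \<in> r f)"
      using edge(1) finite_E by (simp add: of_bool_def sum.delta)
    then show ?thesis
      using vertex edge by (simp add: d_def subgraph_agg_eq_iff)
  qed
  moreover have "d (x + y) = d x + d y" for x y
    by (simp add: d_def sum.distrib)
  ultimately show ?thesis by blast
next
  case (edge e)
  define d :: "('v + 'e \<Rightarrow> nat) \<Rightarrow> int" where "d a = int (a (Inr e))" for a
  have "d q = of_bool (q = p)" if "q \<in> atoms A" for q
    using assms(1) that
    by (cases rule: matching_atom_cases) (auto simp: d_def edge subgraph_agg_eq_iff)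
  moreover have "d (x + y) = d x + d y" for x y
    by (simp add: d_def)
  ultimately show ?thesis by blast
qed

lemma matching_imp_factorial: "is_matching \<Longrightarrow> factorial A"
  unfolding factorial_def
  using agglomeration_factorization_exists factorization_unique_if_duals matching_atom_dual
  by metis

lemma parallel_edges_cycle:
  assumes "e \<in> E" "f \<in> E" "e \<noteq> f" "r e = {v, x}" "r f = {v, x}" "v \<noteq> x"
  shows "is_cycle V E r [v, x] [e, f]"
  unfolding is_cycle_def
proof (intro conjI allI impI)
  fix i assume "i < length [v, x]"
  then have "i = 0 \<or> i = 1" by auto
  then show "r ([e, f] ! i) = {[v, x] ! i, [v, x] ! ((i + 1) mod length [v, x])}"
    using assms(4,5) by (auto simp: insert_commute)
qed (use assms endpoints_subset in auto)

lemma adjacent_edges_not_factorial: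
  assumes e: "e \<in> E" "r e = {v, x}" and f: "f \<in> E" "r f = {v, y}" and "x \<noteq> y"
  shows "\<not> factorial A"
proof -
  have "e \<noteq> f"
    using e f \<open>x \<noteq> y\<close> by (auto simp: doubleton_eq_iff)
  have "v \<in> V"
    using e endpoints_subset by blast
  let ?e = "subgraph_agg (r e) {e}" and ?f = "subgraph_agg (r f) {f}"
    and ?U = "subgraph_agg (r e \<union> r f) {e, f}" and ?v = "subgraph_agg {v} {}"
  have "(v, x) \<in> adj_rel V {e, f} r" "(v, y) \<in> adj_rel V {e, f} r"
    using e f by (auto simp: adj_rel_def)
  then have "?U \<in> atoms A"
    using e f \<open>v \<in> V\<close> endpoints_subset
    by (intro connected_subgraph_atom[of _ _ v]) (auto simp: is_subgraph_def)
  moreover have "?v \<in> atoms A"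
    using vertex_atom \<open>v \<in> V\<close> by blast
  ultimately have "{#?e, ?f#} \<in> factorizations A (?e + ?f)"
    "{#?U, ?v#} \<in> factorizations A (?e + ?f)"
    using edge_atom[OF e(1)] edge_atom[OF f(1)] e f \<open>x \<noteq> y\<close> \<open>e \<noteq> f\<close>
    by (auto simp: factorizations_def fun_eq_iff split_sum_all)
  moreover have "{#?e, ?f#} \<noteq> {#?U, ?v#}"
  proof
    assume "{#?e, ?f#} = {#?U, ?v#}"
    then have "?e \<in># {#?U, ?v#}"
      by (metis union_single_eq_member)
    then show False
      using \<open>e \<noteq> f\<close> by (auto simp: subgraph_agg_eq_iff)
  qed
  moreover have "?e + ?f \<in> A"
    using edge_atom e(1) f(1) agglomerations_add by (auto simp: atoms_def)
  ultimately show ?thesis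
    unfolding factorial_def by blast
qed

lemma factorial_imp_matching:
  assumes "factorial A"
  shows "is_matching"
  unfolding is_matching_def
proof (intro ballI impI)
  fix e f assume ef: "e \<in> E" "f \<in> E" "r e \<inter> r f \<noteq> {}"
  then obtain v where "v \<in> r e" "v \<in> r f" by blast
  then obtain x y where x: "r e = {v, x}" "v \<noteq> x" and y: "r f = {v, y}"
    using endpoints_cases_at ef(1,2) by metis
  show "e = f"
  proof (rule ccontr)
    assume "e \<noteq> f"
    show False
    proof (cases "x = y")
      case True
      then have "is_cycle V E r [v, x] [e, f]"
        using parallel_edges_cycle[OF ef(1,2) \<open>e \<noteq> f\<close> x(1) _ x(2)] y by simp
      then show False
        using cycle_not_half_factorial factorial_imp_half_factorial assms by blast
    next
      case False
      then show False
        using adjacent_edges_not_factorial[OF ef(1) x(1) ef(2) y] assms by blast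
    qed
  qed
qed

theorem factorial_iff_matching: "factorial A \<longleftrightarrow> is_matching"
  using factorial_imp_matching matching_imp_factorial by blast

lemma edge_in_component_edges:
  assumes "e \<in> E" "v \<in> r e"
  shows "e \<in> component_edges V E r v"
proof -
  have "w \<in> component V E r v" if "w \<in> r e" for w
  proof (cases "w = v")
    case True
    then show ?thesis
      using assms endpoints_subset by (auto simp: component_def)
  next
    case False
    then have "(v, w) \<in> adj_rel V E r"
      using assms that endpoints_eq by (auto simp: adj_rel_def)
    then show ?thesis
      using assms that endpoints_subset by (auto simp: component_def)
  qed
  then show ?thesis
    using assms by (auto simp: component_edges_def)
qed

lemma matching_reachable:
  assumes "is_matching" "(x, y) \<in> (adj_rel V E r)\<^sup>*"
  shows "x = y \<or> (\<exists>e\<in>E. x \<in> r e \<and> y \<in> r e)"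
  using assms(2)
proof (induction rule: rtrancl_induct)
  case base
  then show ?case by simp
next
  case (step y z)
  obtain g where g: "g \<in> E" "r g = {y, z}"
    using step.hyps(2) by (auto simp: adj_rel_def)
  from step.IH show ?case
  proof
    assume "x = y"
    then show ?thesis using g by auto
  next
    assume "\<exists>e\<in>E. x \<in> r e \<and> y \<in> r e"
    then obtain e where "e \<in> E" "x \<in> r e" "y \<in> r e" by blast
    then have "e = g"
      using assms(1) g unfolding is_matching_def by blast
    then show ?thesis
      using \<open>x \<in> r e\<close> g by auto
  qed
qed

lemma matching_component_edge_incident:
  assumes "is_matching" "e \<in> component_edges V E r v"
  shows "v \<in> r e"
proof -
  have e: "e \<in> E" "r e \<subseteq> component V E r v"
    using assms(2) by (auto simp: component_edges_def)
  then obtain p where "p \<in> r e"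
    using endpoints_nonempty by blast
  then have "(v, p) \<in> (adj_rel V E r)\<^sup>*"
    using e(2) by (auto simp: component_def)
  then consider "v = p" | g where "g \<in> E" "v \<in> r g" "p \<in> r g"
    using matching_reachable assms(1) by blast
  then show ?thesis
  proof cases
    case 2
    then have "g = e"
      using assms(1) e(1) \<open>p \<in> r e\<close> unfolding is_matching_def by blast
    then show ?thesis using 2 by simp
  qed (use \<open>p \<in> r e\<close> in simp)
qed

lemma matching_iff_component_edges:
  "is_matching \<longleftrightarrow> (\<forall>v\<in>V. card (component_edges V E r v) \<le> 1)"
proof -
  have fin: "finite (component_edges V E r v)" for v
    using finite_E by (auto simp: component_edges_def)
  show ?thesis
  proof
    assume matching: "is_matching"
    have "e = f" if "e \<in> component_edges V E r v" "f \<in> component_edges V E r v" for e f v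
      using matching_component_edge_incident[OF matching that(1)]
        matching_component_edge_incident[OF matching that(2)] that matching
      unfolding is_matching_def component_edges_def by blast
    then show "\<forall>v\<in>V. card (component_edges V E r v) \<le> 1"
      using fin by (simp add: card_le_Suc0_iff_eq)
  next
    assume card: "\<forall>v\<in>V. card (component_edges V E r v) \<le> 1"
    show "is_matching"
      unfolding is_matching_def
    proof (intro ballI impI)
      fix e f assume "e \<in> E" "f \<in> E" "r e \<inter> r f \<noteq> {}"
      then obtain v where "v \<in> r e" "v \<in> r f" "v \<in> V"
        using endpoints_subset by blast
      then show "e = f"
        using card fin edge_in_component_edges \<open>e \<in> E\<close> \<open>f \<in> E\<close>
        by (metis One_nat_def card_le_Suc0_iff_eq)
    qed
  qed
qed

end

theorem theorem4p20:
  fixes V :: "'v set" and E :: "'e set" and r :: "'e \<Rightarrow> 'v set"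
  assumes "graph V E r"
  shows "(half_factorial (agglomerations V E r) \<longleftrightarrow> graph_acyclic V E r)
       \<and> (factorial (agglomerations V E r) \<longleftrightarrow>
            (\<forall>v\<in>V. card (component_edges V E r v) \<le> 1))"
proof -
  interpret multigraph V E r
    using assms by unfold_locales
  show ?thesis
    using half_factorial_iff_acyclic factorial_iff_matching matching_iff_component_edges
    by blast
qed

end
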